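(* Let $L_B$ be the weighted Laplacian of a connected undirected graph on $N$ nodes with positive edge weights, with eigenvalues $0=\lambda_1^B<\lambda_2^B\le\cdots\le\lambda_N^B$. Let $k_P,\tau_P,k_Q,\tau_Q>0$, $\bar b\ge 0$, $c_Q=1+2k_Q\bar b$, and $\alpha>0$. Consider the linear time-invariant system $H$ with state $\psi=(\delta,\omega,V)\in\mathbb{R}^{3N}$, input $\mathrm{w}\in\mathbb{R}^{2N}$ and output $y\in\mathbb{R}^{2N}$: $$\dot\psi=\begin{bmatrix}0 & I & 0\\ -\frac{k_P}{\tau_P}L_B & -\frac{1}{\tau_P}I & 0\\ 0 & 0 & -\frac{c_Q}{\tau_Q}I-\frac{k_Q}{\tau_Q}L_B\end{bmatrix}\psi+\begin{bmatrix}0&0\\ \frac{1}{\tau_P}I & 0\\ 0 & \frac{1}{\tau_Q}I\end{bmatrix}\mathrm{w},\qquad y=\begin{bmatrix}\sqrt{\alpha}L_B^{1/2} & 0 & 0\\ 0&0&\sqrt{\alpha}L_B^{1/2}\end{bmatrix}\psi .$$ Then the squared $\mathcal{H}_2$ norm of $H$ is $$\|H\|_2^2=\frac{\alpha}{2k_P}(N-1)+\frac{\alpha}{2\tau_Q}\sum_{n=2}^N\frac{1}{\frac{c_Q}{\lambda_n^B}+k_Q}.$$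
   Context: $I$ is the $N\times N$ identity and $L_B^{1/2}$ is the unique positive semidefinite square root of $L_B$. The system matrix has a single zero eigenvalue (mode $\delta\propto\mathbf{1}$), which is unobservable from $y$; all other modes are stable, so the $\mathcal{H}_2$ norm of the transfer function $C(sI-A)^{-1}B$ is finite; $\|H\|_2^2$ equals the steady-state output variance $\lim_{t\to\infty}\mathbb{E}[y^*(t)y(t)]$ under unit-covariance white noise input. Interpretation: $y^*y=\delta^TL_G\delta+V^TL_GV$ with $L_G=\alpha L_B$ the conductance Laplacian (uniform resistance-to-reactance ratio $\alpha$), approximating instantaneous transient power losses. *)

theory Defs
  imports "HOL-Analysis.Analysis" "HOL-Library.Numeral_Type"
begin

definition matpow :: "real^'n^'n \<Rightarrow> nat \<Rightarrow> real^'n^'n" where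
  "matpow M k = ((\<lambda>X. X ** M) ^^ k) (mat 1)"

definition mexp :: "real^'n^'n \<Rightarrow> real^'n^'n" where
  "mexp M = (\<Sum>k. (1 / fact k) *\<^sub>R matpow M k)"

definition frob_sq :: "real^'c^'r \<Rightarrow> real" where
  "frob_sq M = (\<Sum>i\<in>UNIV. \<Sum>j\<in>UNIV. (M $ i $ j)^2)"

text \<open>Squared H2 norm of the LTI system (A,B,C) with transfer function C (sI-A)^{-1} B:
  the integral over [0,oo) of the squared Frobenius norm of the impulse response
  C e^{At} B.  We state that this (improper, nonnegative) integral exists and has value v.\<close>
definition has_h2_norm_sq :: "real^'s^'s \<Rightarrow> real^'i^'s \<Rightarrow> real^'s^'o \<Rightarrow> real \<Rightarrow> bool" where
  "has_h2_norm_sq A B C v \<longleftrightarrow>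
     ((\<lambda>t. frob_sq (C ** mexp (t *\<^sub>R A) ** B)) has_integral v) {0..}"

definition laplacian :: "('n::finite \<Rightarrow> 'n \<Rightarrow> real) \<Rightarrow> real^'n^'n" where
  "laplacian w = (\<chi> i j. if i = j then (\<Sum>k\<in>UNIV - {i}. w i k) else - w i j)"

definition psd :: "real^'n^'n \<Rightarrow> bool" where
  "psd M \<longleftrightarrow> transpose M = M \<and> (\<forall>x. 0 \<le> x \<bullet> (M *v x))"

definition psd_sqrt :: "real^'n^'n \<Rightarrow> real^'n^'n" where
  "psd_sqrt M = (THE S. psd S \<and> S ** S = M)"

definition block3 :: "(3 \<Rightarrow> 3 \<Rightarrow> real^'n^'n) \<Rightarrow> real^('n \<times> 3)^('n \<times> 3)" where
  "block3 M = (\<chi> p q. M (snd p) (snd q) $ fst p $ fst q)"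

definition block32 :: "(3 \<Rightarrow> 2 \<Rightarrow> real^'n^'n) \<Rightarrow> real^('n \<times> 2)^('n \<times> 3)" where
  "block32 M = (\<chi> p q. M (snd p) (snd q) $ fst p $ fst q)"

definition block23 :: "(2 \<Rightarrow> 3 \<Rightarrow> real^'n^'n) \<Rightarrow> real^('n \<times> 3)^('n \<times> 2)" where
  "block23 M = (\<chi> p q. M (snd p) (snd q) $ fst p $ fst q)"

definition sysA :: "real^'n^'n \<Rightarrow> real \<Rightarrow> real \<Rightarrow> real \<Rightarrow> real \<Rightarrow> real \<Rightarrow> real^('n \<times> 3)^('n \<times> 3)" where
  "sysA L kP tauP kQ tauQ cQ = block3 (\<lambda>a b.
     if a = 0 \<and> b = 1 then mat 1
     else if a = 1 \<and> b = 0 then - (kP / tauP) *\<^sub>R L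
     else if a = 1 \<and> b = 1 then - (1 / tauP) *\<^sub>R mat 1
     else if a = 2 \<and> b = 2 then - (cQ / tauQ) *\<^sub>R mat 1 - (kQ / tauQ) *\<^sub>R L
     else 0)"

definition sysB :: "real \<Rightarrow> real \<Rightarrow> real^('n::finite \<times> 2)^('n \<times> 3)" where
  "sysB tauP tauQ = block32 (\<lambda>a b.
     if a = 1 \<and> b = 0 then (1 / tauP) *\<^sub>R mat 1
     else if a = 2 \<and> b = 1 then (1 / tauQ) *\<^sub>R mat 1
     else 0)"

definition sysC :: "real^'n^'n \<Rightarrow> real \<Rightarrow> real^('n \<times> 3)^('n \<times> 2)" where
  "sysC L \<alpha> = block23 (\<lambda>a b.
     if a = 0 \<and> b = 0 then sqrt \<alpha> *\<^sub>R psd_sqrt L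
     else if a = 1 \<and> b = 2 then sqrt \<alpha> *\<^sub>R psd_sqrt L
     else 0)"

end

theory Submission
  imports Defs "HOL-Computational_Algebra.Polynomial" "HOL-Real_Asymp.Real_Asymp"
begin

(* Diagonalise the Laplacian by an orthonormal eigenbasis u_i with eigenvalues d_i.  The system
   decouples: along u_i the angle and frequency form a damped oscillator with stiffness
   kP d_i / tauP and damping 1 / tauP, and the voltage decays at rate (cQ + kQ d_i) / tauQ.
   The squared output is alpha * sum_i d_i ((u_i . delta)^2 + (u_i . V)^2), and the integral of each
   modal term equals the initial value of a quadratic Lyapunov function whose derivative is minus
   the integrand and which tends to 0 by exponential stability.  The impulse responses start at
   unit vectors of the frequency and voltage blocks; summing over them, a mode with d_i > 0
   contributes alpha / (2 kP) + alpha / (2 tauQ (cQ / d_i + kQ)) and the zero mode contributes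
   nothing.  Connectedness makes 0 a simple eigenvalue, so lam_1 = 0 and the positive d_i are
   lam_2, ..., lam_N. *)

section \<open>Matrix exponential\<close>

lemma matpow_0 [simp]: "matpow M 0 = mat 1"
  by (simp add: matpow_def)

lemma matpow_Suc: "matpow M (Suc k) = matpow M k ** M"
  by (simp add: matpow_def)

lemma matpow_Suc_left: "matpow M (Suc k) = M ** matpow M k"
proof (induction k)
  case (Suc k)
  have "matpow M (Suc (Suc k)) = (M ** matpow M k) ** M"
    using Suc by (simp only: matpow_Suc[of M "Suc k"])
  then show ?case
    by (simp add: matrix_mul_assoc matpow_Suc)
qed (simp add: matpow_Suc)

lemma matpow_scaleR: "matpow (t *\<^sub>R M) k = (t ^ k) *\<^sub>R matpow M k"
  by (induction k) (simp_all add: matpow_Suc matrix_scalar_ac scalar_matrix_assoc[symmetric])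

lemma abs_matpow_nth_le:
  fixes M :: "real^'n^'n"
  shows "\<bar>matpow M k $ p $ q\<bar> \<le> (\<Sum>r\<in>UNIV. \<Sum>s\<in>UNIV. \<bar>M $ r $ s\<bar>) ^ k"
proof (induction k arbitrary: p q)
  case 0
  then show ?case by (simp add: mat_def)
next
  case (Suc k)
  define R where "R = (\<Sum>r\<in>UNIV. \<Sum>s\<in>UNIV. \<bar>M $ r $ s\<bar>)"
  have "\<bar>matpow M (Suc k) $ p $ q\<bar> \<le> (\<Sum>r\<in>UNIV. \<bar>matpow M k $ p $ r\<bar> * \<bar>M $ r $ q\<bar>)"
    unfolding matpow_Suc matrix_matrix_mult_def by (auto intro: order_trans[OF sum_abs] simp: abs_mult)
  also have "\<dots> \<le> (\<Sum>r\<in>UNIV. R ^ k * \<bar>M $ r $ q\<bar>)"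
    using Suc by (intro sum_mono mult_right_mono) (auto simp: R_def)
  also have "\<dots> = R ^ k * (\<Sum>r\<in>UNIV. \<bar>M $ r $ q\<bar>)"
    by (simp add: sum_distrib_left)
  also have "\<dots> \<le> R ^ k * R"
    unfolding R_def by (intro mult_left_mono sum_mono member_le_sum) (auto simp: sum_nonneg)
  finally show ?case
    by (simp add: R_def mult.commute)
qed

definition mexp_entry :: "real^'n^'n \<Rightarrow> 'n \<Rightarrow> 'n \<Rightarrow> real \<Rightarrow> real" where
  "mexp_entry M p q t = (\<Sum>k. matpow M k $ p $ q / fact k * t ^ k)"

lemma summable_mexp_entry:
  fixes M :: "real^'n^'n"
  shows "summable (\<lambda>k. matpow M k $ p $ q / fact k * t ^ k)"
proof -
  define R where "R = (\<Sum>r\<in>UNIV. \<Sum>s\<in>UNIV. \<bar>M $ r $ s\<bar>)"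
  have "summable (\<lambda>k. (R * \<bar>t\<bar>) ^ k / fact k)"
    using summable_exp[of "R * \<bar>t\<bar>"] by (simp add: divide_inverse mult.commute)
  then show ?thesis
  proof (rule summable_comparison_test'[where N = 0])
    fix k :: nat
    have "norm (matpow M k $ p $ q / fact k * t ^ k) = \<bar>matpow M k $ p $ q\<bar> * \<bar>t\<bar> ^ k / fact k"
      by (simp add: abs_mult power_abs)
    also have "\<dots> \<le> R ^ k * \<bar>t\<bar> ^ k / fact k"
      by (intro divide_right_mono mult_right_mono) (auto simp: R_def abs_matpow_nth_le)
    finally show "norm (matpow M k $ p $ q / fact k * t ^ k) \<le> (R * \<bar>t\<bar>) ^ k / fact k"
      by (simp add: power_mult_distrib)
  qed
qed

lemma mexp_scaleR_nth: "mexp (t *\<^sub>R M) $ p $ q = mexp_entry M p q t"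
proof -
  have "(\<lambda>k. (1 / fact k) *\<^sub>R matpow (t *\<^sub>R M) k) sums (\<chi> p q. mexp_entry M p q t)"
    unfolding sums_def
  proof (intro vec_tendstoI)
    fix p q
    have "(\<lambda>k. matpow M k $ p $ q / fact k * t ^ k) sums mexp_entry M p q t"
      unfolding mexp_entry_def by (rule summable_sums[OF summable_mexp_entry])
    then show "((\<lambda>n. (\<Sum>k<n. (1 / fact k) *\<^sub>R matpow (t *\<^sub>R M) k) $ p $ q)
        \<longlongrightarrow> (\<chi> p q. mexp_entry M p q t) $ p $ q) sequentially"
      by (simp add: sums_def matpow_scaleR mult.commute)
  qed
  then show ?thesis
    unfolding mexp_def by (simp add: sums_unique[symmetric])
qed

lemma mexp_zero: "mexp (0 :: real^'n^'n) = mat 1"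
proof -
  have "(\<lambda>k. matpow M k $ p $ q / fact k * 0 ^ k) sums (mat 1 $ p $ q)" for M :: "real^'n^'n" and p q
    using powser_sums_zero[of "\<lambda>k. matpow M k $ p $ q / fact k"] by simp
  then have "mexp (0 *\<^sub>R (0 :: real^'n^'n)) $ p $ q = mat 1 $ p $ q" for p q
    unfolding mexp_scaleR_nth mexp_entry_def by (simp add: sums_iff)
  then show ?thesis
    by (simp add: vec_eq_iff)
qed

lemma has_real_derivative_mexp_entry:
  fixes M :: "real^'n^'n"
  shows "((\<lambda>t. mexp_entry M p q t) has_real_derivative (\<Sum>r\<in>UNIV. M $ p $ r * mexp_entry M r q t)) (at t)"
proof -
  let ?c = "\<lambda>k. matpow M k $ p $ q / fact k"
  have deriv: "((\<lambda>t. \<Sum>k. ?c k * t ^ k) has_real_derivative (\<Sum>k. diffs ?c k * t ^ k)) (at t)"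
    by (rule termdiffs_strong_converges_everywhere) (rule summable_mexp_entry)
  have "diffs ?c k = (\<Sum>r\<in>UNIV. M $ p $ r * (matpow M k $ r $ q / fact k))" for k
  proof -
    have "diffs ?c k = matpow M (Suc k) $ p $ q / fact k"
      by (simp add: diffs_def del: of_nat_Suc)
    then show ?thesis
      by (simp add: matpow_Suc_left matrix_matrix_mult_def sum_divide_distrib)
  qed
  then have "(\<Sum>k. diffs ?c k * t ^ k) = (\<Sum>k. \<Sum>r\<in>UNIV. M $ p $ r * (matpow M k $ r $ q / fact k * t ^ k))"
    by (simp add: sum_distrib_right mult.assoc)
  also have "\<dots> = (\<Sum>r\<in>UNIV. \<Sum>k. M $ p $ r * (matpow M k $ r $ q / fact k * t ^ k))"
    by (rule suminf_sum) (intro summable_mult summable_mexp_entry)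
  also have "\<dots> = (\<Sum>r\<in>UNIV. M $ p $ r * mexp_entry M r q t)"
    unfolding mexp_entry_def by (intro sum.cong refl suminf_mult summable_mexp_entry)
  finally show ?thesis
    using deriv unfolding mexp_entry_def by simp
qed

lemma has_real_derivative_mexp_mult:
  fixes M :: "real^'n^'n"
  shows "((\<lambda>t. (mexp (t *\<^sub>R M) *v x) $ p) has_real_derivative (M *v (mexp (t *\<^sub>R M) *v x)) $ p) (at t)"
proof -
  have "((\<lambda>t. \<Sum>q\<in>UNIV. mexp_entry M p q t * x $ q) has_real_derivative
          (\<Sum>q\<in>UNIV. (\<Sum>r\<in>UNIV. M $ p $ r * mexp_entry M r q t) * x $ q)) (at t)"
    by (intro DERIV_sum DERIV_cmult_right has_real_derivative_mexp_entry)
  moreover have "(\<Sum>q\<in>UNIV. (\<Sum>r\<in>UNIV. M $ p $ r * mexp_entry M r q t) * x $ q)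
      = (M *v (mexp (t *\<^sub>R M) *v x)) $ p"
    by (simp add: matrix_vector_mult_def mexp_scaleR_nth sum_distrib_left sum_distrib_right mult.assoc)
       (rule sum.swap)
  ultimately show ?thesis
    by (simp add: matrix_vector_mult_def mexp_scaleR_nth)
qed

section \<open>Improper integrals via Lyapunov functions\<close>

lemma has_integral_of_potential:
  fixes q h :: "real \<Rightarrow> real"
  assumes der: "\<And>t. (q has_real_derivative - h t) (at t)"
    and nonneg: "\<And>t. 0 \<le> t \<Longrightarrow> 0 \<le> h t"
    and lim: "(q \<longlongrightarrow> 0) at_top"
  shows "(h has_integral q 0) {0..}"
proof -
  define f where "f = (\<lambda>k::nat. \<lambda>x. if x \<in> {0..real k} then h x else 0)"
  have "(f k has_integral (q 0 - q (real k))) {0..}" for k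
  proof -
    have "((\<lambda>t. - q t) has_real_derivative h t) (at t)" for t
      using DERIV_minus[OF der[of t]] by simp
    then have "(h has_integral (q 0 - q (real k))) {0..real k}"
      using fundamental_theorem_of_calculus[of 0 "real k" "\<lambda>t. - q t" h]
      by (auto simp: has_real_derivative_iff_has_vector_derivative[symmetric] intro: has_field_derivative_at_within)
    then show ?thesis
      unfolding f_def by (subst has_integral_restrict) auto
  qed
  then show ?thesis
  proof (rule has_integral_monotone_convergence_increasing)
    show "f k x \<le> f (Suc k) x" if "x \<in> {0..}" for k x
      using that nonneg by (auto simp: f_def)
    show "(\<lambda>k. f k x) \<longlonglongrightarrow> h x" if "x \<in> {0..}" for x
    proof (rule tendsto_eventually)
      obtain N where N: "x \<le> real N"
        using real_arch_simple by blast
      have "eventually (\<lambda>k. x \<le> real k) sequentially"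
        using eventually_ge_at_top[of N] by eventually_elim (use N in auto)
      then show "eventually (\<lambda>k. f k x = h x) sequentially"
        by eventually_elim (use that in \<open>auto simp: f_def\<close>)
    qed
    have "((\<lambda>k. q (real k)) \<longlongrightarrow> 0) sequentially"
      by (rule filterlim_compose[OF lim filterlim_real_sequentially])
    then show "(\<lambda>k. q 0 - q (real k)) \<longlonglongrightarrow> q 0"
      by (auto intro: tendsto_eq_intros)
  qed
qed

lemma exp_decay_of_differential_inequality:
  fixes E E' :: "real \<Rightarrow> real"
  assumes der: "\<And>t. (E has_real_derivative E' t) (at t)"
    and le: "\<And>t. E' t \<le> - \<gamma> * E t"
    and "0 \<le> t"
  shows "E t \<le> E 0 * exp (- \<gamma> * t)"
proof -
  have "E t * exp (\<gamma> * t) \<le> E 0 * exp (\<gamma> * 0)"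
  proof (rule DERIV_nonpos_imp_nonincreasing[OF \<open>0 \<le> t\<close>])
    fix x
    have "((\<lambda>t. E t * exp (\<gamma> * t)) has_real_derivative (E' x + \<gamma> * E x) * exp (\<gamma> * x)) (at x)"
      by (auto intro!: derivative_eq_intros der simp: algebra_simps)
    moreover have "(E' x + \<gamma> * E x) * exp (\<gamma> * x) \<le> 0"
      using le[of x] by (intro mult_nonpos_nonneg) auto
    ultimately show "\<exists>y. ((\<lambda>t. E t * exp (\<gamma> * t)) has_real_derivative y) (at x) \<and> y \<le> 0"
      by blast
  qed
  then have "E t * exp (\<gamma> * t) * exp (- \<gamma> * t) \<le> E 0 * exp (- \<gamma> * t)"
    by (intro mult_right_mono) auto
  then show ?thesis
    by (simp add: mult.assoc flip: exp_add)
qed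

lemma tendsto_zero_of_square_le_exp:
  fixes f :: "real \<Rightarrow> real"
  assumes bound: "\<And>t. 0 \<le> t \<Longrightarrow> f t ^ 2 \<le> c * exp (- \<gamma> * t)" and "0 < \<gamma>"
  shows "(f \<longlongrightarrow> 0) at_top"
proof (rule Lim_null_comparison)
  show "\<forall>\<^sub>F t in at_top. norm (f t) \<le> sqrt (c * exp (- \<gamma> * t))"
    using eventually_ge_at_top[of 0]
    by eventually_elim (metis bound real_norm_def real_sqrt_abs real_sqrt_le_mono)
  have "((\<lambda>t. exp (- \<gamma> * t)) \<longlongrightarrow> 0) at_top"
    using \<open>0 < \<gamma>\<close> by real_asymp
  then show "((\<lambda>t. sqrt (c * exp (- \<gamma> * t))) \<longlongrightarrow> 0) at_top"
    using tendsto_real_sqrt[OF tendsto_mult_right_zero] by fastforce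
qed

lemma oscillator_energy_le:
  fixes k b x y :: real
  assumes "0 < k"
  shows "k * x ^ 2 + y ^ 2 + b * x * y + b ^ 2 / 2 * x ^ 2 \<le> (2 + 3 * b ^ 2 / (4 * k)) * (k * x ^ 2 + y ^ 2)"
proof -
  have "b * x * y \<le> y ^ 2 + b ^ 2 * x ^ 2 / 4"
    using zero_le_power2[of "y - b * x / 2"] by (simp add: power2_eq_square algebra_simps)
  moreover have "(2 + 3 * b ^ 2 / (4 * k)) * (k * x ^ 2 + y ^ 2)
      = 2 * k * x ^ 2 + 3 * b ^ 2 / 4 * x ^ 2 + (2 + 3 * b ^ 2 / (4 * k)) * y ^ 2"
    using assms by (simp add: field_simps)
  moreover have "2 * y ^ 2 \<le> (2 + 3 * b ^ 2 / (4 * k)) * y ^ 2"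
    using assms by (intro mult_right_mono) auto
  moreover have "0 \<le> k * x ^ 2"
    using assms by simp
  ultimately show ?thesis
    by linarith
qed

text \<open>Exponential stability via the energy
  \<open>E = k d\<^sup>2 + w\<^sup>2 + b d w + b\<^sup>2 d\<^sup>2 / 2 = k d\<^sup>2 + (w + b d / 2)\<^sup>2 + b\<^sup>2 d\<^sup>2 / 4\<close>,
  which satisfies \<open>E' = - b (k d\<^sup>2 + w\<^sup>2) \<le> - (b / K) E\<close> with \<open>K = 2 + 3 b\<^sup>2 / (4 k)\<close>.\<close>

lemma damped_oscillator_tendsto_zero:
  fixes d w :: "real \<Rightarrow> real"
  assumes dd: "\<And>t. (d has_real_derivative w t) (at t)"
    and dw: "\<And>t. (w has_real_derivative - k * d t - b * w t) (at t)"
    and k: "0 < k" and b: "0 < b"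
  shows "(d \<longlongrightarrow> 0) at_top" "(w \<longlongrightarrow> 0) at_top"
proof -
  define E where "E = (\<lambda>t. k * d t ^ 2 + w t ^ 2 + b * d t * w t + b ^ 2 / 2 * d t ^ 2)"
  define K where "K = 2 + 3 * b ^ 2 / (4 * k)"
  have K: "0 < K"
    unfolding K_def using k by (auto intro: add_pos_nonneg)
  have E_sq: "E t = k * d t ^ 2 + (w t + b * d t / 2) ^ 2 + b ^ 2 / 4 * d t ^ 2" for t
    unfolding E_def by (simp add: power2_eq_square algebra_simps)
  have "(E has_real_derivative - b * (k * d t ^ 2 + w t ^ 2)) (at t)" for t
    unfolding E_def
    by (rule derivative_eq_intros dd dw refl | simp)+ (simp add: algebra_simps power2_eq_square)
  moreover have "- b * (k * d t ^ 2 + w t ^ 2) \<le> - (b / K) * E t" for t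
  proof -
    have "(b / K) * E t \<le> (b / K) * (K * (k * d t ^ 2 + w t ^ 2))"
      using oscillator_energy_le[OF k, of "d t" "w t" b] K b unfolding E_def K_def
      by (intro mult_left_mono) auto
    then show ?thesis
      using K by simp
  qed
  ultimately have decay: "E t \<le> E 0 * exp (- (b / K) * t)" if "0 \<le> t" for t
    by (rule exp_decay_of_differential_inequality[OF _ _ that])
  have "0 < b / K"
    using b K by simp
  show "(d \<longlongrightarrow> 0) at_top"
  proof (rule tendsto_zero_of_square_le_exp[OF _ \<open>0 < b / K\<close>])
    fix t :: real assume "0 \<le> t"
    have "k * d t ^ 2 \<le> E t"
      unfolding E_sq by (simp add: add_increasing2)
    with decay[OF \<open>0 \<le> t\<close>] k show "d t ^ 2 \<le> E 0 / k * exp (- (b / K) * t)"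
      by (simp add: field_simps)
  qed
  show "(w \<longlongrightarrow> 0) at_top"
  proof (rule tendsto_zero_of_square_le_exp[OF _ \<open>0 < b / K\<close>])
    fix t :: real assume "0 \<le> t"
    have "w t ^ 2 \<le> 2 * (w t + b * d t / 2) ^ 2 + 2 * (b ^ 2 / 4 * d t ^ 2)"
      using zero_le_power2[of "w t + b * d t"] by (simp add: power2_eq_square algebra_simps)
    also have "\<dots> \<le> 2 * E t"
      unfolding E_sq using k by simp
    finally show "w t ^ 2 \<le> 2 * E 0 * exp (- (b / K) * t)"
      using decay[OF \<open>0 \<le> t\<close>] by simp
  qed
qed

text \<open>The coefficients of the potential \<open>X d\<^sup>2 + 2 Y d w + Z w\<^sup>2\<close> are forced by requiring
  its derivative along solutions to be \<open>- d\<^sup>2\<close>.\<close>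

lemma has_integral_damped_oscillator_square:
  fixes d w :: "real \<Rightarrow> real"
  assumes dd: "\<And>t. (d has_real_derivative w t) (at t)"
    and dw: "\<And>t. (w has_real_derivative - k * d t - b * w t) (at t)"
    and k: "0 < k" and b: "0 < b"
  shows "((\<lambda>t. d t ^ 2) has_integral
           (b / (2 * k) + 1 / (2 * b)) * d 0 ^ 2 + d 0 * w 0 / k + w 0 ^ 2 / (2 * k * b)) {0..}"
proof -
  define X where "X = b / (2 * k) + 1 / (2 * b)"
  define Y where "Y = 1 / (2 * k)"
  define Z where "Z = 1 / (2 * k * b)"
  define q where "q = (\<lambda>t. X * d t ^ 2 + 2 * Y * d t * w t + Z * w t ^ 2)"
  have "(q has_real_derivative - (d t ^ 2)) (at t)" for t
  proof -
    have "(q has_real_derivative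
        X * (2 * d t * w t) + 2 * Y * (w t * w t + d t * (- k * d t - b * w t))
        + Z * (2 * w t * (- k * d t - b * w t))) (at t)"
      unfolding q_def
      by (rule derivative_eq_intros dd dw refl | simp)+ (simp add: algebra_simps power2_eq_square)
    then show ?thesis
      using k b by (simp add: X_def Y_def Z_def field_simps power2_eq_square)
  qed
  moreover have "(q \<longlongrightarrow> 0) at_top"
    unfolding q_def
    using damped_oscillator_tendsto_zero[OF dd dw k b] by (auto intro!: tendsto_eq_intros)
  ultimately have "((\<lambda>t. d t ^ 2) has_integral q 0) {0..}"
    by (intro has_integral_of_potential) auto
  then show ?thesis
    by (simp add: q_def X_def Y_def Z_def)
qed

lemma has_integral_exp_decay_square:
  fixes V :: "real \<Rightarrow> real"
  assumes der: "\<And>t. (V has_real_derivative - \<beta> * V t) (at t)" and \<beta>: "0 < \<beta>"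
  shows "((\<lambda>t. V t ^ 2) has_integral V 0 ^ 2 / (2 * \<beta>)) {0..}"
proof -
  have "((\<lambda>t. V t ^ 2) has_real_derivative - (2 * \<beta>) * V t ^ 2) (at t)" for t
    by (auto intro!: derivative_eq_intros der simp: power2_eq_square)
  then have "V t ^ 2 \<le> V 0 ^ 2 * exp (- (2 * \<beta>) * t)" if "0 \<le> t" for t
    by (rule exp_decay_of_differential_inequality[OF _ _ that]) simp
  then have "(V \<longlongrightarrow> 0) at_top"
    using \<beta> by (intro tendsto_zero_of_square_le_exp[of V "V 0 ^ 2" "2 * \<beta>"]) auto
  then have "((\<lambda>t. V t ^ 2 / (2 * \<beta>)) \<longlongrightarrow> 0) at_top"
    using \<beta> by (auto intro!: tendsto_eq_intros)
  moreover have "((\<lambda>t. V t ^ 2 / (2 * \<beta>)) has_real_derivative - (V t ^ 2)) (at t)" for t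
    using \<beta> by (auto intro!: derivative_eq_intros der simp: power2_eq_square)
  ultimately show ?thesis
    using has_integral_of_potential[of "\<lambda>t. V t ^ 2 / (2 * \<beta>)" "\<lambda>t. V t ^ 2"] by simp
qed

section \<open>Spectral theorem for symmetric matrices\<close>

lemma symmetric_inner_mult:
  fixes L :: "real^'n^'n"
  assumes "transpose L = L"
  shows "x \<bullet> (L *v y) = (L *v x) \<bullet> y"
proof -
  have "x \<bullet> (L *v y) = (x v* L) \<bullet> y"
    by (simp add: dot_lmul_matrix)
  also have "x v* L = transpose L *v x"
    by (simp add: transpose_matrix_vector)
  finally show ?thesis
    using assms by simp
qed

lemma linear_coeff_eq_0_if_quadratic_nonpos:
  fixes \<beta> \<gamma> :: real
  assumes "\<And>t. t * \<beta> + t ^ 2 * \<gamma> \<le> 0"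
  shows "\<beta> = 0"
proof -
  define s where "s = 1 / (\<bar>\<gamma>\<bar> + 1)"
  have "0 < \<bar>\<gamma>\<bar> + 1"
    by simp
  then have s: "0 < s" "s * \<bar>\<gamma>\<bar> < 1"
    unfolding s_def by (simp_all add: divide_less_eq)
  have "s * - \<bar>\<gamma>\<bar> \<le> s * \<gamma>"
    using s(1) by (intro mult_left_mono) auto
  then have "0 < s * (1 + s * \<gamma>)"
    using s by (intro mult_pos_pos) auto
  moreover have "\<beta> ^ 2 * (s * (1 + s * \<gamma>)) \<le> 0"
    using assms[of "s * \<beta>"] by (simp add: power2_eq_square algebra_simps)
  ultimately have "\<beta> ^ 2 \<le> 0"
    by (metis mult_le_cancel_right_pos mult_zero_left)
  then show ?thesis
    by simp
qed

text \<open>A maximiser of the Rayleigh quotient on the unit sphere of an invariant subspace is an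
  eigenvector: the first variation in every direction of the subspace vanishes.\<close>

lemma rayleigh_maximizer_eigenvector:
  fixes L :: "real^'n^'n"
  assumes sym: "transpose L = L" and W: "subspace W" and inv: "\<And>x. x \<in> W \<Longrightarrow> L *v x \<in> W"
    and v: "v \<in> W" "norm v = 1"
    and max: "\<And>x. x \<in> W \<Longrightarrow> norm x = 1 \<Longrightarrow> x \<bullet> (L *v x) \<le> v \<bullet> (L *v v)"
  shows "L *v v = (v \<bullet> (L *v v)) *\<^sub>R v"
proof -
  define m where "m = v \<bullet> (L *v v)"
  have vv: "v \<bullet> v = 1"
    using v by (simp add: dot_square_norm)
  have orth: "h \<bullet> (L *v v - m *\<^sub>R v) = 0" if h: "h \<in> W" for h
  proof -
    have le: "x \<bullet> (L *v x) \<le> m * (x \<bullet> x)" if "x \<in> W" for x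
    proof (cases "x = 0")
      case False
      have "(x /\<^sub>R norm x) \<bullet> (L *v (x /\<^sub>R norm x)) \<le> m"
        using max[of "x /\<^sub>R norm x"] W that False unfolding m_def by (simp add: subspace_scale)
      moreover have "(x /\<^sub>R norm x) \<bullet> (L *v (x /\<^sub>R norm x)) = (x \<bullet> (L *v x)) / (norm x)\<^sup>2"
        by (simp add: matrix_vector_mult_scaleR power2_eq_square divide_inverse)
      ultimately show ?thesis
        using False by (simp add: divide_le_eq power2_norm_eq_inner)
    qed simp
    have "t * (2 * (h \<bullet> (L *v v) - m * (h \<bullet> v))) + t ^ 2 * (h \<bullet> (L *v h) - m * (h \<bullet> h)) \<le> 0" for t
    proof -
      have "v + t *\<^sub>R h \<in> W"
        using W v h by (simp add: subspace_add subspace_scale)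
      moreover have "v \<bullet> (L *v h) = h \<bullet> (L *v v)"
        using symmetric_inner_mult[OF sym, of v h] by (simp add: inner_commute)
      ultimately show ?thesis
        using le[of "v + t *\<^sub>R h"] vv unfolding m_def
        by (simp add: matrix_vector_right_distrib matrix_vector_mult_scaleR inner_add_left inner_add_right
            inner_commute[of h v] power2_eq_square algebra_simps)
    qed
    then have "2 * (h \<bullet> (L *v v) - m * (h \<bullet> v)) = 0"
      by (rule linear_coeff_eq_0_if_quadratic_nonpos)
    then show ?thesis
      by (simp add: inner_diff_right)
  qed
  have "L *v v - m *\<^sub>R v \<in> W"
    using W v inv by (simp add: subspace_diff subspace_scale)
  then have "(L *v v - m *\<^sub>R v) \<bullet> (L *v v - m *\<^sub>R v) = 0"
    by (rule orth)
  then show ?thesis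
    unfolding m_def by simp
qed

lemma symmetric_eigenvector_orthogonal_exists:
  fixes L :: "real^'n^'n"
  assumes sym: "transpose L = L" and "finite S" and card: "card S < CARD('n)"
    and eig: "\<And>s. s \<in> S \<Longrightarrow> \<exists>\<mu>. L *v s = \<mu> *\<^sub>R s"
  obtains v \<mu> where "norm v = 1" "L *v v = \<mu> *\<^sub>R v" "\<And>s. s \<in> S \<Longrightarrow> orthogonal s v"
proof -
  define W where "W = {x. \<forall>s\<in>S. orthogonal s x}"
  have W: "subspace W"
    unfolding W_def by (rule subspace_orthogonal_to_vectors)
  have inv: "L *v x \<in> W" if "x \<in> W" for x
  proof -
    have "s \<bullet> (L *v x) = 0" if "s \<in> S" for s
      using eig[OF that] \<open>x \<in> W\<close> that symmetric_inner_mult[OF sym, of s x]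
      by (auto simp: W_def orthogonal_def)
    then show ?thesis
      by (simp add: W_def orthogonal_def)
  qed
  have "dim S < DIM(real^'n)"
    using dim_le_card'[OF \<open>finite S\<close>] card by simp
  then obtain x :: "real^'n" where x: "x \<noteq> 0" "\<And>y. y \<in> span S \<Longrightarrow> orthogonal x y"
    using orthogonal_to_subspace_exists by blast
  have "x /\<^sub>R norm x \<in> W"
    using x span_base W unfolding W_def
    by (auto simp: orthogonal_commute intro!: orthogonal_clauses(2))
  moreover have "norm (x /\<^sub>R norm x) = 1"
    using x by simp
  ultimately have "x /\<^sub>R norm x \<in> sphere 0 1 \<inter> W"
    by simp
  then have ne: "sphere 0 1 \<inter> W \<noteq> {}"
    by blast
  have "compact (sphere 0 1 \<inter> W)"
    using W by (intro compact_Int_closed compact_sphere closed_subspace)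
  moreover have "continuous_on (sphere 0 1 \<inter> W) (\<lambda>x. x \<bullet> (L *v x))"
    by (intro continuous_intros matrix_vector_mult_linear_continuous_on[THEN continuous_on_compose2[where g = "(*v) L"]]) auto
  ultimately obtain v where v: "v \<in> sphere 0 1 \<inter> W"
      and max: "\<And>y. y \<in> sphere 0 1 \<inter> W \<Longrightarrow> y \<bullet> (L *v y) \<le> v \<bullet> (L *v v)"
    using continuous_attains_sup[OF _ ne] by blast
  have "L *v v = (v \<bullet> (L *v v)) *\<^sub>R v"
    using v max by (intro rayleigh_maximizer_eigenvector[OF sym W inv]) auto
  then show ?thesis
    using that v unfolding W_def by auto
qed

lemma symmetric_orthonormal_eigenvectors_exist:
  fixes L :: "real^'n^'n"
  assumes sym: "transpose L = L" and "k \<le> CARD('n)"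
  shows "\<exists>S. finite S \<and> card S = k \<and> pairwise orthogonal S \<and>
           (\<forall>s\<in>S. norm s = 1 \<and> (\<exists>\<mu>. L *v s = \<mu> *\<^sub>R s))"
  using \<open>k \<le> CARD('n)\<close>
proof (induction k)
  case (Suc k)
  then obtain S where S: "finite S" "card S = k" "pairwise orthogonal S"
      "\<forall>s\<in>S. norm s = 1 \<and> (\<exists>\<mu>. L *v s = \<mu> *\<^sub>R s)"
    by auto
  obtain v \<mu> where v: "norm v = 1" "L *v v = \<mu> *\<^sub>R v" "\<And>s. s \<in> S \<Longrightarrow> orthogonal s v"
    using symmetric_eigenvector_orthogonal_exists[OF sym S(1)] S Suc.prems by auto
  then have "v \<notin> S"
    by (metis norm_eq_zero orthogonal_self zero_neq_one)
  then show ?case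
    using S v by (intro exI[of _ "insert v S"]) (auto intro: pairwise_orthogonal_insert simp: orthogonal_commute)
qed (intro exI[of _ "{}"], auto)

lemma symmetric_matrix_orthonormal_eigenbasis:
  fixes L :: "real^'n^'n"
  assumes sym: "transpose L = L"
  obtains u :: "'n \<Rightarrow> real^'n" and d :: "'n \<Rightarrow> real"
  where "\<And>i j. u i \<bullet> u j = (if i = j then 1 else 0)" "\<And>i. L *v u i = d i *\<^sub>R u i"
proof -
  obtain S where S: "finite S" "card S = CARD('n)" "pairwise orthogonal S"
      "\<forall>s\<in>S. norm s = 1 \<and> (\<exists>\<mu>. L *v s = \<mu> *\<^sub>R s)"
    using symmetric_orthonormal_eigenvectors_exist[OF sym order_refl] by blast
  obtain h where h: "bij_betw h (UNIV :: 'n set) S"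
    using finite_same_card_bij[OF finite_class.finite_UNIV S(1)] S(2) by auto
  then have hS: "h i \<in> S" for i
    by (auto simp: bij_betw_def)
  have "\<forall>i. \<exists>\<mu>. L *v h i = \<mu> *\<^sub>R h i"
    using S(4) hS by blast
  then obtain d where "\<And>i. L *v h i = d i *\<^sub>R h i"
    by metis
  moreover have "h i \<bullet> h j = (if i = j then 1 else 0)" for i j
  proof (cases "i = j")
    case True
    then show ?thesis
      using S(4) hS by (simp add: dot_square_norm)
  next
    case False
    then have "h i \<noteq> h j"
      using bij_betw_imp_inj_on[OF h] by (auto simp: inj_on_def)
    then show ?thesis
      using S(3) hS False by (auto simp: pairwise_def orthogonal_def)
  qed
  ultimately show ?thesis
    using that by blast
qed

lemma psd_sqrt_mult_eigenvector:
  fixes S L :: "real^'n^'n"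
  assumes "psd S" and SS: "S ** S = L" and eig: "L *v v = \<mu> *\<^sub>R v" and "0 \<le> \<mu>"
  shows "S *v v = sqrt \<mu> *\<^sub>R v"
proof -
  have sym: "transpose S = S"
    using \<open>psd S\<close> by (simp add: psd_def)
  define r where "r = sqrt \<mu>"
  define e where "e = S *v v - r *\<^sub>R v"
  have "S *v e = L *v v - r *\<^sub>R (S *v v)"
    by (simp add: e_def SS[symmetric] matrix_vector_mul_assoc matrix_vector_mult_diff_distrib
        matrix_vector_mult_scaleR)
  also have "\<dots> = - r *\<^sub>R e"
    using eig \<open>0 \<le> \<mu>\<close> by (simp add: e_def r_def algebra_simps flip: real_sqrt_mult)
  finally have Se: "S *v e = - r *\<^sub>R e" .
  have "r = 0 \<Longrightarrow> e = 0"
  proof -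
    assume "r = 0"
    then have "L *v v = 0"
      using eig by (simp add: r_def)
    then have "(S *v v) \<bullet> (S *v v) = 0"
      using symmetric_inner_mult[OF sym, of "S *v v" v]
      by (simp add: SS[symmetric] matrix_vector_mul_assoc inner_commute)
    then show "e = 0"
      using \<open>r = 0\<close> by (simp add: e_def)
  qed
  moreover have "0 < r \<Longrightarrow> e = 0"
  proof -
    assume "0 < r"
    have "0 \<le> e \<bullet> (S *v e)"
      using \<open>psd S\<close> by (simp add: psd_def)
    then have "e \<bullet> e \<le> 0"
      using \<open>0 < r\<close> by (simp add: Se mult_le_0_iff)
    then show "e = 0"
      using inner_ge_zero[of e] by simp
  qed
  ultimately show ?thesis
    using real_sqrt_ge_zero[OF \<open>0 \<le> \<mu>\<close>] by (fastforce simp: e_def r_def)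
qed

definition basis_matrix :: "('n \<Rightarrow> real^'n) \<Rightarrow> real^'n^'n" where
  "basis_matrix u = (\<chi> m i. u i $ m)"

definition spectral_matrix :: "('n \<Rightarrow> real^'n) \<Rightarrow> ('n \<Rightarrow> real) \<Rightarrow> real^'n^'n" where
  "spectral_matrix u f = (\<chi> m p. \<Sum>i\<in>UNIV. f i * u i $ m * u i $ p)"

context
  fixes u :: "'n \<Rightarrow> real^'n"
  assumes orthonormal: "\<And>i j. u i \<bullet> u j = (if i = j then 1 else 0)"
begin

lemma transpose_basis_matrix_mult: "transpose (basis_matrix u) ** basis_matrix u = mat 1"
  using orthonormal
  by (simp add: vec_eq_iff matrix_matrix_mult_def transpose_def basis_matrix_def mat_def inner_vec_def)

lemma sum_orthonormal_basis_nth: "(\<Sum>i\<in>UNIV. u i $ m * u i $ p) = (if m = p then 1 else 0)"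
proof -
  have "basis_matrix u ** transpose (basis_matrix u) = mat 1"
    using transpose_basis_matrix_mult matrix_left_right_inverse by blast
  then have "(basis_matrix u ** transpose (basis_matrix u)) $ m $ p = mat 1 $ m $ p"
    by simp
  then show ?thesis
    by (simp add: matrix_matrix_mult_def transpose_def basis_matrix_def mat_def)
qed

lemma spectral_matrix_mult_basis: "spectral_matrix u f *v u j = f j *\<^sub>R u j"
proof -
  have "(spectral_matrix u f *v u j) $ m = (\<Sum>i\<in>UNIV. f i * u i $ m * (u i \<bullet> u j))" for m
    by (simp add: spectral_matrix_def matrix_vector_mult_def inner_vec_def sum_distrib_left
        sum_distrib_right mult.assoc) (rule sum.swap)
  then show ?thesis
    by (simp add: vec_eq_iff orthonormal if_distrib cong: if_cong)
qed

lemma matrix_eq_spectral_matrix: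
  assumes "\<And>j. M *v u j = f j *\<^sub>R u j"
  shows "M = spectral_matrix u f"
proof -
  have "M $ m $ p = (\<Sum>q\<in>UNIV. M $ m $ q * (\<Sum>i\<in>UNIV. u i $ q * u i $ p))" for m p
    by (simp add: sum_orthonormal_basis_nth if_distrib cong: if_cong)
  also have "\<dots> m p = (\<Sum>i\<in>UNIV. (M *v u i) $ m * u i $ p)" for m p
    by (simp add: matrix_vector_mult_def sum_distrib_left sum_distrib_right mult.assoc) (rule sum.swap)
  finally show ?thesis
    using assms by (simp add: vec_eq_iff spectral_matrix_def mult.assoc)
qed

lemma transpose_spectral_matrix: "transpose (spectral_matrix u f) = spectral_matrix u f"
  by (simp add: vec_eq_iff transpose_def spectral_matrix_def mult.commute mult.left_commute)

lemma inner_spectral_matrix_mult: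
  "x \<bullet> (spectral_matrix u f *v y) = (\<Sum>i\<in>UNIV. f i * (u i \<bullet> x) * (u i \<bullet> y))"
proof -
  have "x \<bullet> (spectral_matrix u f *v y)
      = (\<Sum>m\<in>UNIV. \<Sum>i\<in>UNIV. \<Sum>p\<in>UNIV. f i * (u i $ m * x $ m) * (u i $ p * y $ p))"
    by (simp add: inner_vec_def spectral_matrix_def matrix_vector_mult_def sum_distrib_left
        sum_distrib_right algebra_simps) (subst sum.swap, simp)
  also have "\<dots> = (\<Sum>i\<in>UNIV. \<Sum>m\<in>UNIV. \<Sum>p\<in>UNIV. f i * (u i $ m * x $ m) * (u i $ p * y $ p))"
    by (rule sum.swap)
  also have "\<dots> = (\<Sum>i\<in>UNIV. f i * (u i \<bullet> x) * (u i \<bullet> y))"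
    by (simp add: inner_vec_def sum_distrib_left sum_distrib_right mult.assoc)
      (rule sum.cong[OF refl], rule sum.swap)
  finally show ?thesis .
qed

lemma parseval: "x \<bullet> y = (\<Sum>i\<in>UNIV. (u i \<bullet> x) * (u i \<bullet> y))"
  using inner_spectral_matrix_mult[of x "\<lambda>_. 1" y] matrix_eq_spectral_matrix[of "mat 1" "\<lambda>_. 1"]
  by simp

lemma inner_self_spectral_matrix_mult:
  "(spectral_matrix u f *v x) \<bullet> (spectral_matrix u f *v x) = (\<Sum>i\<in>UNIV. f i ^ 2 * (u i \<bullet> x) ^ 2)"
proof -
  have "u i \<bullet> (spectral_matrix u f *v x) = f i * (u i \<bullet> x)" for i
    using symmetric_inner_mult[OF transpose_spectral_matrix]
    by (simp add: spectral_matrix_mult_basis)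
  then show ?thesis
    by (simp add: parseval[of "spectral_matrix u f *v x"] power2_eq_square algebra_simps)
qed

lemma psd_spectral_matrix: "(\<And>i. 0 \<le> f i) \<Longrightarrow> psd (spectral_matrix u f)"
  unfolding psd_def
  by (auto simp: transpose_spectral_matrix inner_spectral_matrix_mult mult.assoc intro!: sum_nonneg)

lemma psd_sqrt_eq_spectral_matrix:
  assumes eig: "\<And>i. L *v u i = d i *\<^sub>R u i" and nonneg: "\<And>i. 0 \<le> d i"
  shows "psd_sqrt L = spectral_matrix u (\<lambda>i. sqrt (d i))"
  unfolding psd_sqrt_def
proof (rule the_equality)
  let ?S = "spectral_matrix u (\<lambda>i. sqrt (d i))"
  have "(?S ** ?S) *v u j = d j *\<^sub>R u j" for j
    using nonneg[of j] by (simp flip: matrix_vector_mul_assoc add: spectral_matrix_mult_basis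
        matrix_vector_mult_scaleR)
  then have "?S ** ?S = L"
    using matrix_eq_spectral_matrix eig by metis
  then show "psd ?S \<and> ?S ** ?S = L"
    using nonneg by (simp add: psd_spectral_matrix)
  show "S = ?S" if "psd S \<and> S ** S = L" for S
    using that psd_sqrt_mult_eigenvector eig nonneg by (intro matrix_eq_spectral_matrix) blast
qed

lemma det_sub_eq_prod_eigenvalues:
  assumes eig: "\<And>i. L *v u i = d i *\<^sub>R u i"
  shows "det (x *\<^sub>R mat 1 - L) = (\<Prod>i\<in>UNIV. x - d i)"
proof -
  define U where "U = basis_matrix u"
  define D where "D = (\<chi> i j. if i = j then x - d j else (0::real))"
  have "((x *\<^sub>R mat 1 - L) ** U) $ m $ i = (U ** D) $ m $ i" for m i
  proof -
    have "(x *\<^sub>R mat 1 - L) *v u i = (x - d i) *\<^sub>R u i"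
      by (simp add: matrix_vector_mult_diff_rdistrib eig algebra_simps flip: scaleR_matrix_vector_assoc)
    then show ?thesis
      by (simp add: matrix_matrix_mult_def matrix_vector_mult_def U_def basis_matrix_def D_def
          if_distrib mult.commute vec_eq_iff cong: if_cong)
  qed
  then have "det (x *\<^sub>R mat 1 - L) * det U = det U * det D"
    by (metis det_mul vec_eq_iff)
  moreover have "det (transpose U) * det U = 1"
    using transpose_basis_matrix_mult by (metis U_def det_I det_mul)
  moreover have "det D = (\<Prod>i\<in>UNIV. x - d i)"
    by (subst det_diagonal) (auto simp: D_def)
  ultimately show ?thesis
    by (metis mult.commute mult_cancel_left mult_zero_left zero_neq_one)
qed

end

lemma proots_prod_linear_factors:
  fixes f :: "'a \<Rightarrow> 'b::idom"
  assumes "finite A"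
  shows "proots (\<Prod>a\<in>A. [:- f a, 1:]) = image_mset f (mset_set A)"
  using assms
proof (induction A rule: finite_induct)
  case (insert x F)
  have "(\<Prod>a\<in>F. [:- f a, 1:]) \<noteq> 0"
    using insert(1) by (simp add: prod_zero_iff)
  then have "proots ([:- f x, 1:] * (\<Prod>a\<in>F. [:- f a, 1:])) = {#f x#} + image_mset f (mset_set F)"
    using insert(3) by (subst proots_mult) auto
  then show ?case
    by (simp only: prod.insert[OF insert(1,2)]) (use insert(1,2) in simp)
qed simp

lemma image_mset_eq_if_prod_linear_factors_eq:
  fixes f :: "'a \<Rightarrow> real" and g :: "'b \<Rightarrow> real"
  assumes "finite A" "finite B" and prod: "\<And>x. (\<Prod>a\<in>A. x - f a) = (\<Prod>b\<in>B. x - g b)"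
  shows "image_mset f (mset_set A) = image_mset g (mset_set B)"
proof -
  have "poly (\<Prod>a\<in>A. [:- f a, 1:]) = poly (\<Prod>b\<in>B. [:- g b, 1:])"
    using prod by (simp add: poly_prod fun_eq_iff)
  then have "(\<Prod>a\<in>A. [:- f a, 1:]) = (\<Prod>b\<in>B. [:- g b, 1:])"
    by (simp add: poly_eq_poly_eq_iff)
  then show ?thesis
    using assms(1,2) by (metis proots_prod_linear_factors)
qed

lemma sum_comp_eq_if_image_mset_eq:
  assumes "image_mset f (mset_set A) = image_mset g (mset_set B)"
  shows "(\<Sum>a\<in>A. \<phi> (f a)) = (\<Sum>b\<in>B. \<phi> (g b))"
  using arg_cong[OF assms, of "\<lambda>M. sum_mset (image_mset \<phi> M)"]
  by (simp add: sum_unfold_sum_mset multiset.map_comp comp_def)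

section \<open>Graph Laplacians\<close>

lemma transpose_laplacian:
  assumes "\<And>i j. w i j = w j i"
  shows "transpose (laplacian w) = laplacian w"
  using assms by (simp add: vec_eq_iff transpose_def laplacian_def)

lemma laplacian_mult_vec_nth: "(laplacian w *v x) $ i = (\<Sum>j\<in>UNIV. w i j * (x $ i - x $ j))"
proof -
  have "(laplacian w *v x) $ i
      = (\<Sum>k\<in>UNIV - {i}. w i k) * x $ i + (\<Sum>j\<in>UNIV - {i}. - w i j * x $ j)"
    by (simp add: matrix_vector_mult_def laplacian_def sum.remove[of UNIV i] if_distrib cong: if_cong)
  also have "\<dots> = (\<Sum>j\<in>UNIV - {i}. w i j * (x $ i - x $ j))"
    by (simp add: sum_distrib_right sum_distrib_left sum_subtractf sum_negf algebra_simps)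
  also have "\<dots> = (\<Sum>j\<in>UNIV. w i j * (x $ i - x $ j))"
    by (simp add: sum.remove[of UNIV i])
  finally show ?thesis .
qed

lemma inner_laplacian_mult:
  assumes sym: "\<And>i j. w i j = w j i"
  shows "x \<bullet> (laplacian w *v x) = (\<Sum>i\<in>UNIV. \<Sum>j\<in>UNIV. w i j * (x $ i - x $ j) ^ 2) / 2"
proof -
  have "x \<bullet> (laplacian w *v x) = (\<Sum>i\<in>UNIV. \<Sum>j\<in>UNIV. w i j * x $ i * (x $ i - x $ j))"
    by (simp add: inner_vec_def laplacian_mult_vec_nth sum_distrib_left algebra_simps)
  moreover have "\<dots> = (\<Sum>i\<in>UNIV. \<Sum>j\<in>UNIV. w i j * x $ j * (x $ j - x $ i))"
    using sym by (subst sum.swap) (simp add: mult.commute)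
  moreover have "(\<Sum>i\<in>UNIV. \<Sum>j\<in>UNIV. w i j * (x $ i - x $ j) ^ 2)
      = (\<Sum>i\<in>UNIV. \<Sum>j\<in>UNIV. w i j * x $ i * (x $ i - x $ j))
        + (\<Sum>i\<in>UNIV. \<Sum>j\<in>UNIV. w i j * x $ j * (x $ j - x $ i))"
    by (simp add: sum.distrib[symmetric] power2_eq_square algebra_simps)
  ultimately show ?thesis
    by simp
qed

lemma laplacian_eigenvalue_nonneg:
  assumes sym: "\<And>i j. w i j = w j i" and nonneg: "\<And>i j. 0 \<le> w i j"
    and eig: "laplacian w *v v = \<mu> *\<^sub>R v" and "v \<noteq> 0"
  shows "0 \<le> \<mu>"
proof -
  have "0 \<le> v \<bullet> (laplacian w *v v)"
    unfolding inner_laplacian_mult[where w = w, OF sym] using nonneg by (auto intro!: sum_nonneg)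
  then have "0 \<le> \<mu> * (v \<bullet> v)"
    by (simp add: eig)
  moreover have "0 < v \<bullet> v"
    using \<open>v \<noteq> 0\<close> by simp
  ultimately show ?thesis
    by (simp add: zero_le_mult_iff)
qed

lemma connected_laplacian_kernel_const:
  assumes sym: "\<And>i j. w i j = w j i" and nonneg: "\<And>i j. 0 \<le> w i j"
    and conn: "\<And>i j. (i, j) \<in> {(a, b). a \<noteq> b \<and> 0 < w a b}\<^sup>*"
    and null: "laplacian w *v x = 0"
  shows "x $ i = x $ j"
proof -
  have "(\<Sum>i\<in>UNIV. \<Sum>j\<in>UNIV. w i j * (x $ i - x $ j) ^ 2) = 0"
    using inner_laplacian_mult[where w = w, OF sym, of x] by (simp add: null)
  then have zero: "w a b * (x $ a - x $ b) ^ 2 = 0" for a b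
    using nonneg by (simp add: sum_nonneg_eq_0_iff sum_nonneg)
  have edge: "x $ a = x $ b" if "0 < w a b" for a b
    using zero[of a b] that by simp
  show ?thesis
    using conn[of i j] by (induction rule: rtrancl_induct) (auto dest: edge)
qed

lemma orthonormal_constant_vectors_eq:
  fixes u :: "'n::finite \<Rightarrow> real^'n"
  assumes orthonormal: "\<And>i j. u i \<bullet> u j = (if i = j then 1 else 0)"
    and const: "\<And>k p q. k \<in> {i, j} \<Longrightarrow> u k $ p = u k $ q"
  shows "i = j"
proof (rule ccontr)
  assume "i \<noteq> j"
  fix p :: 'n
  define c where "c = (\<lambda>k. u k $ p)"
  have "u k $ q = c k" if "k \<in> {i, j}" for k q
    using const[OF that] by (simp add: c_def)
  then have uu: "u k \<bullet> u l = real CARD('n) * (c k * c l)" if "k \<in> {i, j}" "l \<in> {i, j}" for k l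
    using that by (simp add: inner_vec_def)
  have "(real CARD('n) * (c i * c i)) * (real CARD('n) * (c j * c j)) = (real CARD('n) * (c i * c j)) ^ 2"
    by (simp add: power2_eq_square algebra_simps)
  also have "real CARD('n) * (c i * c j) = 0"
    using uu[of i j] orthonormal[of i j] \<open>i \<noteq> j\<close> by simp
  finally show False
    using uu[of i i] uu[of j j] orthonormal[of i i] orthonormal[of j j] by auto
qed

text \<open>The constant vector spans the kernel: it is an eigenvector for 0, so 0 occurs, and two
  orthonormal constant vectors cannot exist.\<close>

lemma connected_laplacian_simple_zero_eigenvalue:
  fixes u :: "'n::finite \<Rightarrow> real^'n"
  assumes sym: "\<And>i j. w i j = w j i" and nonneg: "\<And>i j. 0 \<le> w i j"
    and conn: "\<And>i j. (i, j) \<in> {(a, b). a \<noteq> b \<and> 0 < w a b}\<^sup>*"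
    and orthonormal: "\<And>i j. u i \<bullet> u j = (if i = j then 1 else 0)"
    and eig: "\<And>i. laplacian w *v u i = d i *\<^sub>R u i"
  shows "\<exists>!i. d i = 0"
proof -
  define ones :: "real^'n" where "ones = (\<chi> _. 1)"
  have L_ones: "laplacian w *v ones = 0"
    by (simp add: vec_eq_iff laplacian_mult_vec_nth ones_def)
  have "\<exists>i. d i = 0"
  proof (rule ccontr)
    assume "\<nexists>i. d i = 0"
    moreover have "d i * (u i \<bullet> ones) = 0" for i
      using symmetric_inner_mult[OF transpose_laplacian[where w = w, OF sym], of "u i" ones] by (simp add: L_ones eig)
    ultimately have "ones \<bullet> ones = 0"
      using parseval[OF orthonormal, of ones ones] by simp
    then show False
      by (simp add: ones_def inner_vec_def)
  qed
  moreover have "i = j" if "d i = 0" "d j = 0" for i j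
    using connected_laplacian_kernel_const[OF sym nonneg conn] eig that
    by (intro orthonormal_constant_vectors_eq[OF orthonormal]) auto
  ultimately show ?thesis
    by blast
qed

lemma sorted_eigenvalues_simple_zero:
  fixes d :: "'a::finite \<Rightarrow> real" and lam :: "nat \<Rightarrow> real"
  assumes mset: "image_mset d (mset_set UNIV) = image_mset lam (mset_set {1..N})"
    and nonneg: "\<And>i. 0 \<le> d i" and zero: "\<exists>!i. d i = 0"
    and sorted: "\<And>m n. 1 \<le> m \<Longrightarrow> m \<le> n \<Longrightarrow> n \<le> N \<Longrightarrow> lam m \<le> lam n"
  shows "lam 1 = 0" and "\<And>n. 2 \<le> n \<Longrightarrow> n \<le> N \<Longrightarrow> 0 < lam n"
proof -
  have range: "lam ` {1..N} = range d"
    using arg_cong[OF mset, of set_mset] by simp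
  have lam_nonneg: "0 \<le> lam n" if "1 \<le> n" "n \<le> N" for n
  proof -
    have "lam n \<in> lam ` {1..N}"
      using that by simp
    then show ?thesis
      unfolding range using nonneg by auto
  qed
  obtain i0 where i0: "{i \<in> UNIV. d i = 0} = {i0}"
    using zero by blast
  have "card {n \<in> {1..N}. lam n = 0} = card {i \<in> UNIV. d i = 0}"
    using sum_comp_eq_if_image_mset_eq[OF mset, of "\<lambda>x. if x = 0 then 1 else 0 :: nat"]
    by (simp only: card_eq_sum sum.inter_filter finite_class.finite_UNIV finite_atLeastAtMost)
  then have "card {n \<in> {1..N}. lam n = 0} = 1"
    unfolding i0 by simp
  then obtain n0 where n0: "{n \<in> {1..N}. lam n = 0} = {n0}"
    by (rule card_1_singletonE)
  then have "1 \<le> n0" "n0 \<le> N" "lam n0 = 0"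
    by auto
  then show lam1: "lam 1 = 0"
    using sorted[of 1 n0] lam_nonneg[of 1] by simp
  show "0 < lam n" if "2 \<le> n" "n \<le> N" for n
  proof (rule ccontr)
    assume "\<not> 0 < lam n"
    then have "n \<in> {n \<in> {1..N}. lam n = 0}" "1 \<in> {n \<in> {1..N}. lam n = 0}"
      using that lam_nonneg[of n] lam1 by auto
    then have "n \<in> {n0}" "1 \<in> {n0}"
      unfolding n0 .
    then show False
      using that by simp
  qed
qed

lemma sum_pos_eigenvalues_eq_sum_from_2:
  fixes d :: "'a::finite \<Rightarrow> real" and lam :: "nat \<Rightarrow> real"
  assumes mset: "image_mset d (mset_set UNIV) = image_mset lam (mset_set {1..N})" and "1 \<le> N"
    and nonneg: "\<And>i. 0 \<le> d i" and zero: "\<exists>!i. d i = 0"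
    and sorted: "\<And>m n. 1 \<le> m \<Longrightarrow> m \<le> n \<Longrightarrow> n \<le> N \<Longrightarrow> lam m \<le> lam n"
  shows "(\<Sum>i\<in>UNIV. if 0 < d i then g (d i) else 0) = (\<Sum>n = 2..N. g (lam n))"
proof -
  note lam = sorted_eigenvalues_simple_zero[OF mset nonneg zero sorted]
  have "{1..N} = insert 1 {2..N}"
    using \<open>1 \<le> N\<close> by auto
  then have "(\<Sum>i\<in>UNIV. if 0 < d i then g (d i) else 0) = (\<Sum>n = 2..N. if 0 < lam n then g (lam n) else 0)"
    using sum_comp_eq_if_image_mset_eq[OF mset, of "\<lambda>x. if 0 < x then g x else 0"] lam(1) by simp
  also have "\<dots> = (\<Sum>n = 2..N. g (lam n))"
    using lam(2) by (intro sum.cong) auto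
  finally show ?thesis .
qed

section \<open>Block and modal structure of the system\<close>

lemma sum_UNIV_3: "(\<Sum>b\<in>UNIV. f b) = f 0 + f 1 + f (2 :: 3)"
proof -
  have "(3 :: 3) = 0"
    by simp
  then show ?thesis
    using sum_3[of f] by (simp only: ac_simps)
qed

lemma UNIV_2_eq: "(UNIV :: 2 set) = {0, 1}"
proof -
  have "(2 :: 2) = 0"
    by simp
  then show ?thesis
    using UNIV_2 by (simp only: insert_commute)
qed

lemma sum_UNIV_2: "(\<Sum>b\<in>UNIV. f b) = f 0 + f (1 :: 2)"
  by (simp add: UNIV_2_eq)

lemma sum_UNIV_prod: "(\<Sum>x\<in>UNIV. f x) = (\<Sum>a\<in>UNIV. \<Sum>b\<in>UNIV. f (a, b))"
  by (simp add: sum.cartesian_product flip: UNIV_Times_UNIV)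

definition vblock :: "real^('n::finite \<times> 'k::finite) \<Rightarrow> 'k \<Rightarrow> real^'n" where
  "vblock y b = (\<chi> q. y $ (q, b))"

lemma vblock_nth [simp]: "vblock y b $ q = y $ (q, b)"
  by (simp add: vblock_def)

lemma matrix_vector_mult_uminus: "(- A) *v x = - (A *v x :: 'a::ring_1^'m)"
  using matrix_vector_mult_diff_rdistrib[of 0 A x] by simp

lemma vblock_block3_mult: "vblock (block3 M *v y) a = (\<Sum>b\<in>UNIV. M a b *v vblock y b)"
proof -
  have "(block3 M *v y) $ (p, a) = (\<Sum>b\<in>UNIV. (M a b *v vblock y b) $ p)" for p
    by (simp add: block3_def matrix_vector_mult_def sum_UNIV_prod) (rule sum.swap)
  then show ?thesis
    by (simp add: vec_eq_iff sum_component)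
qed

lemma vblock_sysA_mult:
  "vblock (sysA L kP tauP kQ tauQ cQ *v y) 0 = vblock y 1"
  "vblock (sysA L kP tauP kQ tauQ cQ *v y) 1 = - (kP / tauP) *\<^sub>R (L *v vblock y 0) - (1 / tauP) *\<^sub>R vblock y 1"
  "vblock (sysA L kP tauP kQ tauQ cQ *v y) 2 = - (cQ / tauQ) *\<^sub>R vblock y 2 - (kQ / tauQ) *\<^sub>R (L *v vblock y 2)"
  unfolding sysA_def vblock_block3_mult sum_UNIV_3
  by (simp_all add: matrix_vector_mult_diff_rdistrib matrix_vector_mult_uminus
      flip: scaleR_matrix_vector_assoc)

lemma sysC_mult_nth:
  "(sysC L \<alpha> *v y) $ (p, 0) = sqrt \<alpha> * (psd_sqrt L *v vblock y 0) $ p"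
  "(sysC L \<alpha> *v y) $ (p, 1) = sqrt \<alpha> * (psd_sqrt L *v vblock y 2) $ p"
  by (simp_all add: sysC_def block23_def matrix_vector_mult_def sum_UNIV_prod sum_UNIV_3 sum_distrib_left
      mult.assoc)

lemma vblock_column_sysB:
  "vblock (column (k, 0) (sysB tauP tauQ)) b = (if b = 1 then axis k (1 / tauP) else 0)"
  "vblock (column (k, 1) (sysB tauP tauQ)) b = (if b = 2 then axis k (1 / tauQ) else 0)"
  by (simp_all add: vec_eq_iff column_def sysB_def block32_def mat_def axis_def)

lemma frob_sq_mult_column:
  "frob_sq (C ** F ** B) = (\<Sum>j\<in>UNIV. \<Sum>r\<in>UNIV. ((C *v (F *v column j B)) $ r) ^ 2)"
proof -
  have "(C ** F ** B) $ r $ j = (C *v (F *v column j B)) $ r" for r j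
    by (simp add: matrix_vector_mul_assoc matrix_matrix_mult_def matrix_vector_mult_def column_def
        sum_distrib_left sum_distrib_right mult.assoc) (rule sum.swap)
  then show ?thesis
    unfolding frob_sq_def by simp (rule sum.swap)
qed

lemma has_real_derivative_inner_vblock:
  assumes "\<And>t p. ((\<lambda>t. y t $ p) has_real_derivative (A *v y t) $ p) (at t)"
  shows "((\<lambda>t. v \<bullet> vblock (y t) b) has_real_derivative v \<bullet> vblock (A *v y t) b) (at t)"
  unfolding inner_vec_def by (auto intro!: DERIV_sum DERIV_cmult assms)

context
  fixes L :: "real^'n^'n" and v :: "real^'n" and \<mu> :: real
  assumes sym: "transpose L = L" and eig: "L *v v = \<mu> *\<^sub>R v"
begin

lemma inner_eigenvector_mult: "v \<bullet> (L *v x) = \<mu> * (v \<bullet> x)"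
  using symmetric_inner_mult[OF sym, of v x] by (simp add: eig)

lemma inner_vblock_sysA_mult:
  "v \<bullet> vblock (sysA L kP tauP kQ tauQ cQ *v y) 0 = v \<bullet> vblock y 1"
  "v \<bullet> vblock (sysA L kP tauP kQ tauQ cQ *v y) 1
     = - (kP / tauP * \<mu>) * (v \<bullet> vblock y 0) - 1 / tauP * (v \<bullet> vblock y 1)"
  "v \<bullet> vblock (sysA L kP tauP kQ tauQ cQ *v y) 2 = - ((cQ + kQ * \<mu>) / tauQ) * (v \<bullet> vblock y 2)"
  by (simp_all add: vblock_sysA_mult inner_diff_right inner_eigenvector_mult add_divide_distrib
      algebra_simps)

lemma has_integral_modal_output:
  fixes y :: "real \<Rightarrow> real^('n \<times> 3)"
  assumes ode: "\<And>t p. ((\<lambda>t. y t $ p) has_real_derivative (sysA L kP tauP kQ tauQ cQ *v y t) $ p) (at t)"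
    and pos: "0 < kP" "0 < tauP" "0 < kQ" "0 < tauQ" "0 < cQ" and "0 \<le> \<mu>"
    and y0: "vblock (y 0) 0 = 0"
  shows "((\<lambda>t. \<mu> * (v \<bullet> vblock (y t) 0) ^ 2 + \<mu> * (v \<bullet> vblock (y t) 2) ^ 2) has_integral
           (if 0 < \<mu> then tauP ^ 2 / (2 * kP) * (v \<bullet> vblock (y 0) 1) ^ 2
              + tauQ * \<mu> * (v \<bullet> vblock (y 0) 2) ^ 2 / (2 * (cQ + kQ * \<mu>)) else 0)) {0..}"
proof (cases "0 < \<mu>")
  case True
  have D: "((\<lambda>t. v \<bullet> vblock (y t) b) has_real_derivative
      v \<bullet> vblock (sysA L kP tauP kQ tauQ cQ *v y t) b) (at t)" for b t
    by (rule has_real_derivative_inner_vblock[OF ode])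
  have deriv:
    "((\<lambda>t. v \<bullet> vblock (y t) 0) has_real_derivative v \<bullet> vblock (y t) 1) (at t)"
    "((\<lambda>t. v \<bullet> vblock (y t) 1) has_real_derivative
        - (kP / tauP * \<mu>) * (v \<bullet> vblock (y t) 0) - 1 / tauP * (v \<bullet> vblock (y t) 1)) (at t)"
    "((\<lambda>t. v \<bullet> vblock (y t) 2) has_real_derivative
        - ((cQ + kQ * \<mu>) / tauQ) * (v \<bullet> vblock (y t) 2)) (at t)" for t
    using D[of 0 t] D[of 1 t] D[of 2 t] unfolding inner_vblock_sysA_mult by simp_all
  have "0 < kP / tauP * \<mu>" "0 < 1 / tauP" "0 < (cQ + kQ * \<mu>) / tauQ"
    using pos True by (simp_all add: add_pos_pos)
  note oscillator = has_integral_damped_oscillator_square[OF deriv(1,2) this(1,2)]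
    and decay = has_integral_exp_decay_square[OF deriv(3) this(3)]
  have "\<mu> * ((1 / tauP / (2 * (kP / tauP * \<mu>)) + 1 / (2 * (1 / tauP))) * (v \<bullet> vblock (y 0) 0) ^ 2
      + (v \<bullet> vblock (y 0) 0) * (v \<bullet> vblock (y 0) 1) / (kP / tauP * \<mu>)
      + (v \<bullet> vblock (y 0) 1) ^ 2 / (2 * (kP / tauP * \<mu>) * (1 / tauP)))
      = tauP ^ 2 / (2 * kP) * (v \<bullet> vblock (y 0) 1) ^ 2"
    using pos True by (simp add: y0 power2_eq_square)
  then have delta: "((\<lambda>t. \<mu> * (v \<bullet> vblock (y t) 0) ^ 2) has_integral
      tauP ^ 2 / (2 * kP) * (v \<bullet> vblock (y 0) 1) ^ 2) {0..}"
    using has_integral_mult_right[OF oscillator, of \<mu>] by simp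
  have voltage_value: "\<mu> * ((v \<bullet> vblock (y 0) 2) ^ 2 / (2 * ((cQ + kQ * \<mu>) / tauQ)))
      = tauQ * \<mu> * (v \<bullet> vblock (y 0) 2) ^ 2 / (2 * (cQ + kQ * \<mu>))"
    by simp
  have voltage: "((\<lambda>t. \<mu> * (v \<bullet> vblock (y t) 2) ^ 2) has_integral
      tauQ * \<mu> * (v \<bullet> vblock (y 0) 2) ^ 2 / (2 * (cQ + kQ * \<mu>))) {0..}"
    using has_integral_mult_right[OF decay, of \<mu>] unfolding voltage_value .
  show ?thesis
    using has_integral_add[OF delta voltage] True by simp
qed (use \<open>0 \<le> \<mu>\<close> in simp)

end

lemma sum_square_sysC_mult:
  fixes u :: "'n::finite \<Rightarrow> real^'n"
  assumes orthonormal: "\<And>i j. u i \<bullet> u j = (if i = j then 1 else 0)"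
    and eig: "\<And>i. L *v u i = d i *\<^sub>R u i" and nonneg: "\<And>i. 0 \<le> d i" and "0 \<le> \<alpha>"
  shows "(\<Sum>r\<in>UNIV. ((sysC L \<alpha> *v y) $ r) ^ 2)
           = \<alpha> * (\<Sum>i\<in>UNIV. d i * (u i \<bullet> vblock y 0) ^ 2 + d i * (u i \<bullet> vblock y 2) ^ 2)"
proof -
  define S where "S = psd_sqrt L"
  have S: "S = spectral_matrix u (\<lambda>i. sqrt (d i))"
    unfolding S_def by (rule psd_sqrt_eq_spectral_matrix[OF orthonormal eig nonneg])
  have "(\<Sum>r\<in>UNIV. ((sysC L \<alpha> *v y) $ r) ^ 2)
      = (\<Sum>m\<in>UNIV. \<alpha> * ((S *v vblock y 0) $ m) ^ 2 + \<alpha> * ((S *v vblock y 2) $ m) ^ 2)"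
    using \<open>0 \<le> \<alpha>\<close> by (simp add: sum_UNIV_prod sum_UNIV_2 sysC_mult_nth S_def power_mult_distrib)
  also have "\<dots> = \<alpha> * ((S *v vblock y 0) \<bullet> (S *v vblock y 0) + (S *v vblock y 2) \<bullet> (S *v vblock y 2))"
    by (simp add: inner_vec_def sum.distrib sum_distrib_left power2_eq_square algebra_simps)
  also have "\<dots> = \<alpha> * (\<Sum>i\<in>UNIV. d i * (u i \<bullet> vblock y 0) ^ 2 + d i * (u i \<bullet> vblock y 2) ^ 2)"
    unfolding S inner_self_spectral_matrix_mult[OF orthonormal] using nonneg by (simp add: sum.distrib)
  finally show ?thesis .
qed

lemma sum_columns_sysB:
  "(\<Sum>j\<in>UNIV. f (vblock (column j (sysB tauP tauQ)) 1) (vblock (column j (sysB tauP tauQ)) 2))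
     = (\<Sum>k\<in>UNIV. f (axis k (1 / tauP)) 0 + f 0 (axis k (1 / tauQ)))"
  by (simp add: sum_UNIV_prod sum_UNIV_2 vblock_column_sysB)

lemma has_integral_sysA_impulse_mode:
  fixes L :: "real^'n::finite^'n" and j :: "'n \<times> 2"
  assumes sym: "transpose L = L" and eig: "L *v v = \<mu> *\<^sub>R v" and "0 \<le> \<mu>"
    and pos: "0 < kP" "0 < tauP" "0 < kQ" "0 < tauQ" "0 < cQ"
  defines "y \<equiv> \<lambda>t. mexp (t *\<^sub>R sysA L kP tauP kQ tauQ cQ) *v column j (sysB tauP tauQ)"
  shows "((\<lambda>t. \<mu> * (v \<bullet> vblock (y t) 0) ^ 2 + \<mu> * (v \<bullet> vblock (y t) 2) ^ 2) has_integral
           (if 0 < \<mu> then tauP ^ 2 / (2 * kP) * (v \<bullet> vblock (column j (sysB tauP tauQ)) 1) ^ 2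
              + tauQ * \<mu> * (v \<bullet> vblock (column j (sysB tauP tauQ)) 2) ^ 2 / (2 * (cQ + kQ * \<mu>))
            else 0)) {0..}"
proof -
  have y0: "y 0 = column j (sysB tauP tauQ)"
    by (simp add: y_def mexp_zero)
  obtain k b where j: "j = (k, b)"
    by (cases j)
  have "b \<in> {0, 1}"
    using UNIV_2_eq by blast
  then have "vblock (y 0) 0 = 0"
    by (auto simp: y0 j vblock_column_sysB)
  then show ?thesis
    unfolding y0[symmetric] using pos \<open>0 \<le> \<mu>\<close>
    by (intro has_integral_modal_output[OF sym eig]) (simp_all add: y_def has_real_derivative_mexp_mult)
qed

lemma sum_sysB_impulse_mode:
  fixes v :: "real^'n::finite"
  assumes unit: "v \<bullet> v = 1" and pos: "0 < kP" "0 < tauP" "0 < kQ" "0 < tauQ" "0 < cQ" and "0 < \<mu>"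
  shows "(\<Sum>j\<in>UNIV. tauP ^ 2 / (2 * kP) * (v \<bullet> vblock (column j (sysB tauP tauQ)) 1) ^ 2
            + tauQ * \<mu> * (v \<bullet> vblock (column j (sysB tauP tauQ)) 2) ^ 2 / (2 * (cQ + kQ * \<mu>)))
         = 1 / (2 * kP) + 1 / (2 * tauQ) * (1 / (cQ / \<mu> + kQ))"
proof -
  have "(\<Sum>j\<in>UNIV. tauP ^ 2 / (2 * kP) * (v \<bullet> vblock (column j (sysB tauP tauQ)) 1) ^ 2
        + tauQ * \<mu> * (v \<bullet> vblock (column j (sysB tauP tauQ)) 2) ^ 2 / (2 * (cQ + kQ * \<mu>)))
      = (\<Sum>k\<in>UNIV. (v $ k) ^ 2 * (1 / (2 * kP) + \<mu> / (2 * tauQ * (cQ + kQ * \<mu>))))"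
    unfolding sum_columns_sysB[where f = "\<lambda>x1 x2. tauP ^ 2 / (2 * kP) * (v \<bullet> x1) ^ 2
        + tauQ * \<mu> * (v \<bullet> x2) ^ 2 / (2 * (cQ + kQ * \<mu>))"]
    using pos by (intro sum.cong) (simp_all add: inner_axis power2_eq_square field_simps)
  also have "\<dots> = 1 / (2 * kP) + \<mu> / (2 * tauQ * (cQ + kQ * \<mu>))"
    using unit by (simp add: inner_vec_def power2_eq_square flip: sum_distrib_right)
  finally show ?thesis
    using pos \<open>0 < \<mu>\<close> by (simp add: field_simps)
qed

lemma has_h2_norm_sq_eigenbasis:
  fixes L :: "real^'n::finite^'n" and u :: "'n \<Rightarrow> real^'n"
  assumes sym: "transpose L = L" and orthonormal: "\<And>i j. u i \<bullet> u j = (if i = j then 1 else 0)"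
    and eig: "\<And>i. L *v u i = d i *\<^sub>R u i" and nonneg: "\<And>i. 0 \<le> d i"
    and pos: "0 < kP" "0 < tauP" "0 < kQ" "0 < tauQ" "0 < cQ" "0 \<le> \<alpha>"
  shows "has_h2_norm_sq (sysA L kP tauP kQ tauQ cQ) (sysB tauP tauQ) (sysC L \<alpha>)
           (\<Sum>i\<in>UNIV. if 0 < d i then \<alpha> / (2 * kP) + \<alpha> / (2 * tauQ) * (1 / (cQ / d i + kQ)) else 0)"
proof -
  define A where "A = sysA L kP tauP kQ tauQ cQ"
  define B where "B = (sysB tauP tauQ :: real^('n \<times> 2)^('n \<times> 3))"
  define y where "y = (\<lambda>j t. mexp (t *\<^sub>R A) *v column j B)"
  define h where "h = (\<lambda>i j. if 0 < d i then tauP ^ 2 / (2 * kP) * (u i \<bullet> vblock (column j B) 1) ^ 2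
      + tauQ * d i * (u i \<bullet> vblock (column j B) 2) ^ 2 / (2 * (cQ + kQ * d i)) else 0)"
  have "((\<lambda>t. \<Sum>j\<in>UNIV. \<Sum>i\<in>UNIV. \<alpha> * (d i * (u i \<bullet> vblock (y j t) 0) ^ 2
      + d i * (u i \<bullet> vblock (y j t) 2) ^ 2)) has_integral (\<Sum>j\<in>UNIV. \<Sum>i\<in>UNIV. \<alpha> * h i j)) {0..}"
    unfolding h_def y_def A_def B_def
    using has_integral_sysA_impulse_mode[OF sym eig nonneg pos(1-5)]
    by (intro has_integral_sum has_integral_mult_right) auto
  moreover have "frob_sq (sysC L \<alpha> ** mexp (t *\<^sub>R A) ** B)
      = (\<Sum>j\<in>UNIV. \<Sum>i\<in>UNIV. \<alpha> * (d i * (u i \<bullet> vblock (y j t) 0) ^ 2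
          + d i * (u i \<bullet> vblock (y j t) 2) ^ 2))" for t
    unfolding frob_sq_mult_column sum_square_sysC_mult[OF orthonormal eig nonneg pos(6)] y_def
    by (simp add: sum_distrib_left)
  moreover have "(\<Sum>j\<in>UNIV. \<Sum>i\<in>UNIV. \<alpha> * h i j)
      = (\<Sum>i\<in>UNIV. if 0 < d i then \<alpha> / (2 * kP) + \<alpha> / (2 * tauQ) * (1 / (cQ / d i + kQ)) else 0)"
  proof -
    have mode: "(\<Sum>j\<in>UNIV. h i j)
        = (if 0 < d i then 1 / (2 * kP) + 1 / (2 * tauQ) * (1 / (cQ / d i + kQ)) else 0)" for i
      using sum_sysB_impulse_mode[OF _ pos(1-5), of "u i" "d i"] orthonormal[of i i]
      by (simp add: h_def B_def)
    have "(\<Sum>j\<in>UNIV. \<Sum>i\<in>UNIV. \<alpha> * h i j) = (\<Sum>i\<in>UNIV. \<alpha> * (\<Sum>j\<in>UNIV. h i j))"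
      by (subst sum.swap) (simp add: sum_distrib_left)
    then show ?thesis
      unfolding mode by (simp add: distrib_left if_distrib cong: if_cong)
  qed
  ultimately show ?thesis
    unfolding has_h2_norm_sq_def A_def B_def by simp
qed

theorem theorem2:
  fixes w :: "'n::finite \<Rightarrow> 'n \<Rightarrow> real"
    and lam :: "nat \<Rightarrow> real"
    and kP tauP kQ tauQ bbar \<alpha> cQ :: real
  assumes w_sym: "\<And>i j. w i j = w j i"
    and w_nonneg: "\<And>i j. 0 \<le> w i j"
    and connected: "\<And>i j. (i, j) \<in> {(a, b). a \<noteq> b \<and> 0 < w a b}\<^sup>*"
    and eig: "\<And>x. det (x *\<^sub>R mat 1 - laplacian w) = (\<Prod>n = 1..CARD('n). x - lam n)"
    and lam_sorted: "\<And>m n. 1 \<le> m \<Longrightarrow> m \<le> n \<Longrightarrow> n \<le> CARD('n) \<Longrightarrow> lam m \<le> lam n"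
    and pos: "0 < kP" "0 < tauP" "0 < kQ" "0 < tauQ" "0 < \<alpha>"
    and bbar: "0 \<le> bbar"
    and cQ: "cQ = 1 + 2 * kQ * bbar"
  shows "has_h2_norm_sq (sysA (laplacian w) kP tauP kQ tauQ cQ) (sysB tauP tauQ)
           (sysC (laplacian w) \<alpha>)
           (\<alpha> / (2 * kP) * (real CARD('n) - 1)
            + \<alpha> / (2 * tauQ) * (\<Sum>n = 2..CARD('n). 1 / (cQ / lam n + kQ)))"
proof -
  have sym: "transpose (laplacian w) = laplacian w"
    by (rule transpose_laplacian) (rule w_sym)
  obtain u :: "'n \<Rightarrow> real^'n" and d :: "'n \<Rightarrow> real"
    where orthonormal: "\<And>i j. u i \<bullet> u j = (if i = j then 1 else 0)"
      and eigL: "\<And>i. laplacian w *v u i = d i *\<^sub>R u i"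
    by (fact symmetric_matrix_orthonormal_eigenbasis[OF sym])
  have nonneg: "0 \<le> d i" for i
    using orthonormal[of i i] by (intro laplacian_eigenvalue_nonneg[where w = w, OF w_sym w_nonneg eigL]) auto
  have "0 < cQ"
    using cQ pos bbar by (simp add: add_pos_nonneg)
  note h2 = has_h2_norm_sq_eigenbasis[OF sym orthonormal eigL nonneg pos(1-4) this less_imp_le[OF pos(5)]]
  have mset: "image_mset d (mset_set UNIV) = image_mset lam (mset_set {1..CARD('n)})"
    using det_sub_eq_prod_eigenvalues[OF orthonormal eigL] eig
    by (intro image_mset_eq_if_prod_linear_factors_eq) simp_all
  have "(\<Sum>i\<in>UNIV. if 0 < d i then \<alpha> / (2 * kP) + \<alpha> / (2 * tauQ) * (1 / (cQ / d i + kQ)) else 0)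
      = (\<Sum>n = 2..CARD('n). \<alpha> / (2 * kP) + \<alpha> / (2 * tauQ) * (1 / (cQ / lam n + kQ)))"
    using connected_laplacian_simple_zero_eigenvalue[where w = w, OF w_sym w_nonneg connected orthonormal eigL]
    by (intro sum_pos_eigenvalues_eq_sum_from_2[OF mset _ nonneg _ lam_sorted]) (simp_all add: Suc_leI)
  also have "\<dots> = \<alpha> / (2 * kP) * (real CARD('n) - 1)
      + \<alpha> / (2 * tauQ) * (\<Sum>n = 2..CARD('n). 1 / (cQ / lam n + kQ))"
    by (simp add: sum.distrib sum_distrib_left of_nat_diff Suc_leI)
  finally show ?thesis
    using h2 by (simp only:)
qed

end
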